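(* Let $n\ge4$ be even, $p\ge n+1$ an integer, $c_1$ a positive integer, $a_k=pc_k$, $c_{k+1}=p^2c_k$, and let $T$, $I^{(k)}_i$ and $\lambda_i$ be as in the context. Then for every odd $i$ with $3\le i\le n-1$, every $k\ge1$ and every integer $j$ with $1\le j\le n/2-1$ and $j\ne\frac{i-1}{2}$, $$\lambda_i(I^{(k)}_{2j})>\lambda_i(I^{(k)}_{2j+1}).$$
   Context: $\pi$ is the permutation of $\{1,\dots,n\}$ with top row $1,2,\dots,n$ and bottom row $n,3,2,5,4,\dots,n-1,n-2,1$. Right Rauzy induction: step "0" when the rightmost domain (top) interval is longer, "1" when the rightmost image (bottom) interval is longer. For $a,c>0$, $\dot\gamma_{m,a}=1^{n-1-m}0^a10^2$, $\gamma_{a,c}=0\,\dot\gamma_{n-2,a}\cdots\dot\gamma_{2,a}\,1^{c(n-1)}$; its transition matrix $\Theta_{a,c}$ (old lengths $=\Theta_{a,c}\cdot$new lengths) has row $1=(1,c,\dots,c)$, row $n=(1,c+1,\dots,c+1)$, and for $1\le i\le(n-2)/2$: row $2i$ has $0$ in column 1, $2$ in columns $2i,2i+1$, $1$ in the other columns among $2,\dots,n$; row $2i+1$ has $a$ in column $2i$, $a+1$ in column $2i+1$, $0$ elsewhere. $\Theta_k=\Theta_{a_k,c_k}$. $T$ is an IET of $[0,1)$ with permutation $\pi$ whose right Rauzy induction path is $\gamma_{a_1,c_1}\gamma_{a_2,c_2}\cdots$; $I^{(k)}$ is the interval on which the induced map lives after the first $k$ blocks and $I^{(k)}_1,\dots,I^{(k)}_n$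 its exchanged subintervals; lengths satisfy $\ell^{(k-1)}=\Theta_k\ell^{(k)}$. For $v\ge0$, $|v|$ is the sum of entries and $\overline v=v/|v|$. $\lambda_i$ denotes the $T$-invariant Borel probability measure such that for every $k\ge0$, $(\lambda_i(I^{(k)}_t))_t$ is a positive multiple of $\lim_{m\to\infty}\overline{\Theta_{k+1}\cdots\Theta_me_i}$. *)

theory Defs
  imports Complex_Main
begin

text \<open>Vectors indexed by 1..n are functions nat => real; n x n matrices are
  functions nat => nat => real, with indices in 1..n.\<close>

definition Theta :: "nat \<Rightarrow> nat \<Rightarrow> nat \<Rightarrow> nat \<Rightarrow> nat \<Rightarrow> real" where
  "Theta n a c r s =
     (if r \<in> {1..n} \<and> s \<in> {1..n} then
        (if r = 1 then (if s = 1 then 1 else real c)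
         else if r = n then (if s = 1 then 1 else real c + 1)
         else if even r then (if s = 1 then 0 else if s = r \<or> s = r + 1 then 2 else 1)
         else (if s = r - 1 then real a else if s = r then real a + 1 else 0))
      else 0)"

definition matvec :: "nat \<Rightarrow> (nat \<Rightarrow> nat \<Rightarrow> real) \<Rightarrow> (nat \<Rightarrow> real) \<Rightarrow> nat \<Rightarrow> real" where
  "matvec n M v = (\<lambda>r. \<Sum>s=1..n. M r s * v s)"

text \<open>thetaprod n Th k d v = Th (k+1) * Th (k+2) * ... * Th (k+d) * v\<close>
fun thetaprod :: "nat \<Rightarrow> (nat \<Rightarrow> nat \<Rightarrow> nat \<Rightarrow> real) \<Rightarrow> nat \<Rightarrow> nat \<Rightarrow> (nat \<Rightarrow> real) \<Rightarrow> nat \<Rightarrow> real" where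
  "thetaprod n Th k 0 v = v"
| "thetaprod n Th k (Suc d) v = thetaprod n Th k d (matvec n (Th (k + d + 1)) v)"

definition unitvec :: "nat \<Rightarrow> nat \<Rightarrow> real" where
  "unitvec i = (\<lambda>t. if t = i then 1 else 0)"

definition vnorm1 :: "nat \<Rightarrow> (nat \<Rightarrow> real) \<Rightarrow> real" where
  "vnorm1 n v = (\<Sum>t=1..n. v t)"

definition normalized :: "nat \<Rightarrow> (nat \<Rightarrow> real) \<Rightarrow> nat \<Rightarrow> real" where
  "normalized n v = (\<lambda>t. v t / vnorm1 n v)"

end

theory Submission
  imports Defs
begin

text \<open>Let \<open>S(v) = v\<^sub>2 + \<dots> + v\<^sub>n\<close>. Multiplying by \<open>\<Theta>\<^sub>a\<^sub>,\<^sub>c\<close> puts at least \<open>(c + 1) S(v)\<close> on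
  the last coordinate, while the coordinates \<open>2j, 2j+1\<close> only receive
  \<open>S(v) + v\<^sub>2\<^sub>j + v\<^sub>2\<^sub>j\<^sub>+\<^sub>1\<close> and \<open>a v\<^sub>2\<^sub>j + (a + 1) v\<^sub>2\<^sub>j\<^sub>+\<^sub>1\<close>. Hence the property
  ``\<open>a\<^sub>k (v\<^sub>2\<^sub>j + v\<^sub>2\<^sub>j\<^sub>+\<^sub>1) \<le> 3/5 S(v)\<close> for every pair not containing \<open>i\<close>, and \<open>v\<^sub>1 \<le> S(v)\<close>'',
  which holds for \<open>e\<^sub>i\<close>, passes from \<open>\<Theta>\<^sub>k\<^sub>+\<^sub>2 \<cdots> \<Theta>\<^sub>m e\<^sub>i\<close> to \<open>\<Theta>\<^sub>k\<^sub>+\<^sub>1 \<cdots> \<Theta>\<^sub>m e\<^sub>i\<close> as soon as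
  \<open>5 a\<^sub>k \<le> c\<^sub>k\<^sub>+\<^sub>1\<close> (here \<open>c\<^sub>k\<^sub>+\<^sub>1 = p a\<^sub>k\<close>). For such a vector \<open>v\<close>, row \<open>2j\<close> of \<open>\<Theta>\<^sub>k\<^sub>+\<^sub>1 v\<close>
  exceeds row \<open>2j+1\<close> by at least \<open>S(v) - a\<^sub>k\<^sub>+\<^sub>1(v\<^sub>2\<^sub>j + v\<^sub>2\<^sub>j\<^sub>+\<^sub>1) \<ge> 2/5 S(v)\<close>, while
  \<open>v\<^sub>1 \<le> S(v)\<close> bounds the total mass of \<open>\<Theta>\<^sub>k\<^sub>+\<^sub>1 v\<close> by \<open>2n(a\<^sub>k\<^sub>+\<^sub>1 + c\<^sub>k\<^sub>+\<^sub>1 + 2) S(v)\<close>.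
  So the normalised gap is bounded below independently of \<open>m\<close> and survives the limit.\<close>

definition tail_sum :: "nat \<Rightarrow> (nat \<Rightarrow> real) \<Rightarrow> real" where
  "tail_sum n v = (\<Sum>s=2..n. v s)"

lemma sum_atLeast1_split:
  "(n::nat) \<ge> 1 \<Longrightarrow> (\<Sum>s=1..n. f s) = f 1 + (\<Sum>s=2..n. f s)"
  by (simp add: sum.atLeast_Suc_atMost numeral_2_eq_2)

lemma vnorm1_eq_tail_sum: "n \<ge> 1 \<Longrightarrow> vnorm1 n v = v 1 + tail_sum n v"
  unfolding vnorm1_def tail_sum_def by (rule sum_atLeast1_split)

lemma sum_skip_first_eq_tail_sum:
  "(n::nat) \<ge> 1 \<Longrightarrow> (\<Sum>s=1..n. if s = 1 then 0 else v s) = tail_sum n v"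
  unfolding tail_sum_def by (subst sum_atLeast1_split) (auto intro: sum.cong)

lemma matvec_Theta_first_row:
  assumes "1 \<le> n"
  shows "matvec n (Theta n a c) v 1 = v 1 + real c * tail_sum n v"
proof -
  have "matvec n (Theta n a c) v 1
      = (\<Sum>s=1..n. (if s = 1 then v s else 0) + real c * (if s = 1 then 0 else v s))"
    unfolding matvec_def using assms by (intro sum.cong) (auto simp: Theta_def)
  also have "\<dots> = v 1 + real c * (\<Sum>s=1..n. if s = 1 then 0 else v s)"
    using assms by (simp only: sum.distrib sum_distrib_left sum.delta) simp
  finally show ?thesis
    using assms by (simp only: sum_skip_first_eq_tail_sum)
qed

lemma matvec_Theta_last_row:
  assumes "2 \<le> n"
  shows "matvec n (Theta n a c) v n = v 1 + (real c + 1) * tail_sum n v"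
proof -
  have "matvec n (Theta n a c) v n
      = (\<Sum>s=1..n. (if s = 1 then v s else 0) + (real c + 1) * (if s = 1 then 0 else v s))"
    unfolding matvec_def using assms by (intro sum.cong) (auto simp: Theta_def)
  also have "\<dots> = v 1 + (real c + 1) * (\<Sum>s=1..n. if s = 1 then 0 else v s)"
    using assms by (simp only: sum.distrib sum_distrib_left sum.delta) simp
  finally show ?thesis
    using assms by (simp only: sum_skip_first_eq_tail_sum)
qed

lemma matvec_Theta_even_row:
  assumes "even r" "2 \<le> r" "r < n"
  shows "matvec n (Theta n a c) v r = tail_sum n v + v r + v (r + 1)"
proof -
  have "matvec n (Theta n a c) v r
      = (\<Sum>s=1..n. (if s = 1 then 0 else v s) + (if s = r then v s else 0)
                    + (if s = r + 1 then v s else 0))"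
    unfolding matvec_def using assms by (intro sum.cong) (auto simp: Theta_def)
  also have "\<dots> = (\<Sum>s=1..n. if s = 1 then 0 else v s) + v r + v (r + 1)"
    using assms by (simp add: sum.distrib)
  finally show ?thesis
    using assms by (simp only: sum_skip_first_eq_tail_sum)
qed

lemma matvec_Theta_odd_row:
  assumes "odd r" "3 \<le> r" "r < n"
  shows "matvec n (Theta n a c) v r = real a * v (r - 1) + (real a + 1) * v r"
proof -
  have "matvec n (Theta n a c) v r
      = (\<Sum>s=1..n. (if s = r - 1 then real a * v s else 0) + (if s = r then (real a + 1) * v s else 0))"
    unfolding matvec_def using assms by (intro sum.cong) (auto simp: Theta_def)
  also have "\<dots> = real a * v (r - 1) + (real a + 1) * v r"
    using assms by (simp add: sum.distrib) arith
  finally show ?thesis .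
qed

lemma matvec_Theta_pair_rows:
  assumes "1 \<le> j" "2 * j + 1 < n"
  shows "matvec n (Theta n a c) v (2 * j) = tail_sum n v + v (2 * j) + v (2 * j + 1)"
    and "matvec n (Theta n a c) v (2 * j + 1) = real a * v (2 * j) + (real a + 1) * v (2 * j + 1)"
  using assms matvec_Theta_even_row[of "2 * j" n a c v] matvec_Theta_odd_row[of "2 * j + 1" n a c v]
  by simp_all

lemma matvec_Theta_nonneg:
  assumes "\<forall>t\<in>{1..n}. v t \<ge> 0"
  shows "matvec n (Theta n a c) v r \<ge> 0"
  unfolding matvec_def using assms by (intro sum_nonneg mult_nonneg_nonneg) (auto simp: Theta_def)

lemma matvec_Theta_le:
  assumes "\<forall>t\<in>{1..n}. v t \<ge> 0"
  shows "matvec n (Theta n a c) v r \<le> (real a + real c + 2) * vnorm1 n v"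
proof -
  have "matvec n (Theta n a c) v r \<le> (\<Sum>s=1..n. (real a + real c + 2) * v s)"
    unfolding matvec_def using assms
    by (intro sum_mono mult_right_mono) (auto simp: Theta_def)
  then show ?thesis
    by (simp add: vnorm1_def sum_distrib_left)
qed

lemma thetaprod_Suc_outer:
  "thetaprod n Th k (Suc d) v = matvec n (Th (k + 1)) (thetaprod n Th (k + 1) d v)"
  by (induction d arbitrary: v) (simp_all add: add_ac)

definition small_pairs :: "nat \<Rightarrow> nat \<Rightarrow> nat \<Rightarrow> (nat \<Rightarrow> real) \<Rightarrow> bool" where
  "small_pairs n A i v \<longleftrightarrow>
     (\<forall>t\<in>{1..n}. v t \<ge> 0) \<and> tail_sum n v > 0 \<and> v 1 \<le> tail_sum n v \<and>
     (\<forall>j. 1 \<le> j \<and> j \<le> n div 2 - 1 \<and> j \<noteq> (i - 1) div 2 \<longrightarrow>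
        real A * (v (2 * j) + v (2 * j + 1)) \<le> 3/5 * tail_sum n v)"

lemma small_pairs_unitvec:
  assumes "odd i" "3 \<le> i" "i \<le> n - 1"
  shows "small_pairs n A i (unitvec i)"
proof -
  have "tail_sum n (unitvec i) = 1"
    unfolding tail_sum_def unitvec_def using assms by simp
  moreover have "unitvec i (2 * j) = 0" "unitvec i (2 * j + 1) = 0" if "j \<noteq> (i - 1) div 2" for j
    using that assms unfolding unitvec_def by auto
  ultimately show ?thesis
    unfolding small_pairs_def using assms by (auto simp: unitvec_def)
qed

lemma small_pairs_matvec_Theta:
  assumes n: "even n" "n \<ge> 4" and v: "small_pairs n A' i v"
    and A': "A' \<ge> 2" and A_c': "5 * A \<le> c'"
  shows "small_pairs n A i (matvec n (Theta n A' c') v)"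
proof -
  define x where "x = matvec n (Theta n A' c') v"
  define S where "S = tail_sum n v"
  have v_nonneg: "\<forall>t\<in>{1..n}. v t \<ge> 0" and S_pos: "S > 0" and "v 1 \<le> S"
    and v_pairs: "\<And>j. 1 \<le> j \<and> j \<le> n div 2 - 1 \<and> j \<noteq> (i - 1) div 2 \<Longrightarrow>
        real A' * (v (2 * j) + v (2 * j + 1)) \<le> 3/5 * S"
    using v unfolding small_pairs_def S_def by blast+
  have x_nonneg: "\<forall>t\<in>{1..n}. x t \<ge> 0"
    unfolding x_def using v_nonneg by (blast intro: matvec_Theta_nonneg)
  have "x n \<le> tail_sum n x"
    unfolding tail_sum_def using x_nonneg n by (intro member_le_sum) auto
  moreover have "x n = v 1 + (real c' + 1) * S" and "x 1 = v 1 + real c' * S"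
    unfolding x_def S_def using n matvec_Theta_last_row matvec_Theta_first_row by simp_all
  moreover have "v 1 \<ge> 0"
    using v_nonneg n by simp
  ultimately have tail_x: "real c' * S + S \<le> tail_sum n x" and "x 1 \<le> tail_sum n x"
    using \<open>v 1 \<le> S\<close> by (simp_all add: algebra_simps)
  have "real A * (x (2 * j) + x (2 * j + 1)) \<le> 3/5 * tail_sum n x"
    if j: "1 \<le> j \<and> j \<le> n div 2 - 1 \<and> j \<noteq> (i - 1) div 2" for j
  proof -
    have rows: "1 \<le> j" "2 * j + 1 < n"
      using j n by auto
    have "1 * v (2 * j) \<le> real A' * v (2 * j)" "2 * v (2 * j + 1) \<le> real A' * v (2 * j + 1)"
      using v_nonneg rows A' by (intro mult_right_mono; simp)+
    moreover have "x (2 * j) + x (2 * j + 1)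
        = S + (real A' + 1) * v (2 * j) + (real A' + 2) * v (2 * j + 1)"
      unfolding x_def S_def matvec_Theta_pair_rows[OF rows] by (simp add: algebra_simps)
    ultimately have "x (2 * j) + x (2 * j + 1) \<le> S + 2 * (real A' * (v (2 * j) + v (2 * j + 1)))"
      by (simp add: algebra_simps)
    also have "\<dots> \<le> 3 * S"
      using v_pairs[OF j] S_pos by linarith
    finally have "real A * (x (2 * j) + x (2 * j + 1)) \<le> real A * (3 * S)"
      by (intro mult_left_mono) simp_all
    also have "\<dots> \<le> 3/5 * (real c' * S)"
      using A_c' S_pos by (simp add: mult_right_mono)
    finally show ?thesis
      using tail_x S_pos by linarith
  qed
  moreover have "tail_sum n x > 0"
    using tail_x S_pos zero_le_mult_iff[of "real c'" S] by linarith
  ultimately show ?thesis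
    unfolding small_pairs_def x_def[symmetric]
    using x_nonneg \<open>x 1 \<le> tail_sum n x\<close> by blast
qed

lemma normalized_matvec_Theta_gap:
  assumes n: "even n" "n \<ge> 4" and v: "small_pairs n A i v"
    and j: "1 \<le> j \<and> j \<le> n div 2 - 1 \<and> j \<noteq> (i - 1) div 2"
  shows "normalized n (matvec n (Theta n A c) v) (2 * j)
           - normalized n (matvec n (Theta n A c) v) (2 * j + 1)
         \<ge> 1 / (5 * real n * (real A + real c + 2))"
proof -
  define x where "x = matvec n (Theta n A c) v"
  define S where "S = tail_sum n v"
  define M where "M = real A + real c + 2"
  have v_nonneg: "\<forall>t\<in>{1..n}. v t \<ge> 0" and S_pos: "S > 0" and "v 1 \<le> S"
    and pair: "real A * (v (2 * j) + v (2 * j + 1)) \<le> 3/5 * S"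
    using v j unfolding small_pairs_def S_def by blast+
  have rows: "1 \<le> j" "2 * j + 1 < n"
    using j n by auto
  have "x (2 * j) - x (2 * j + 1) = S - (real A - 1) * v (2 * j) - real A * v (2 * j + 1)"
    unfolding x_def S_def matvec_Theta_pair_rows[OF rows] by (simp add: algebra_simps)
  also have "\<dots> \<ge> S - real A * (v (2 * j) + v (2 * j + 1))"
    using v_nonneg rows by (simp add: algebra_simps)
  finally have gap: "x (2 * j) - x (2 * j + 1) \<ge> 2/5 * S"
    using pair by linarith
  have "vnorm1 n v \<le> 2 * S"
    using n \<open>v 1 \<le> S\<close> by (simp add: vnorm1_eq_tail_sum S_def)
  then have "x t \<le> M * (2 * S)" for t
    unfolding x_def M_def
    by (rule order_trans[OF matvec_Theta_le[OF v_nonneg] mult_left_mono]) simp_all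
  then have "vnorm1 n x \<le> real n * (M * (2 * S))"
    unfolding vnorm1_def using sum_bounded_above[of "{1..n}" x] by simp
  moreover have "vnorm1 n x > 0"
  proof -
    have "x n = v 1 + (real c + 1) * S"
      unfolding x_def S_def using n by (simp add: matvec_Theta_last_row)
    moreover have "v 1 \<ge> 0" "(real c + 1) * S > 0"
      using v_nonneg n S_pos by simp_all
    moreover have "x n \<le> vnorm1 n x"
      unfolding vnorm1_def x_def using v_nonneg n
      by (intro member_le_sum matvec_Theta_nonneg) auto
    ultimately show ?thesis
      by linarith
  qed
  ultimately have "(2/5 * S) / (real n * (M * (2 * S))) \<le> (x (2 * j) - x (2 * j + 1)) / vnorm1 n x"
    using gap S_pos by (intro frac_le) simp_all
  moreover have "(2/5 * S) / (real n * (M * (2 * S))) = 1 / (5 * real n * M)"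
    using S_pos by (simp add: field_simps)
  ultimately show ?thesis
    unfolding normalized_def x_def M_def by (simp add: diff_divide_distrib)
qed

context
  fixes n i :: nat and a c :: "nat \<Rightarrow> nat"
  assumes n: "even n" "n \<ge> 4" and i: "odd i" "3 \<le> i" "i \<le> n - 1"
    and growth: "\<And>k. k \<ge> 1 \<Longrightarrow> a k \<ge> 2 \<and> 5 * a k \<le> c (k + 1)"
begin

lemma small_pairs_thetaprod:
  "k \<ge> 1 \<Longrightarrow> small_pairs n (a k) i (thetaprod n (\<lambda>m. Theta n (a m) (c m)) k d (unitvec i))"
proof (induction d arbitrary: k)
  case 0
  then show ?case
    using small_pairs_unitvec[OF i] by simp
next
  case (Suc d)
  then show ?case
    unfolding thetaprod_Suc_outer
    using small_pairs_matvec_Theta[OF n Suc.IH] growth[of k] growth[of "k + 1"] by simp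
qed

lemma normalized_thetaprod_gap:
  assumes "k \<ge> 1" and "d \<ge> 1" and "1 \<le> j \<and> j \<le> n div 2 - 1 \<and> j \<noteq> (i - 1) div 2"
  shows "normalized n (thetaprod n (\<lambda>m. Theta n (a m) (c m)) k d (unitvec i)) (2 * j)
           - normalized n (thetaprod n (\<lambda>m. Theta n (a m) (c m)) k d (unitvec i)) (2 * j + 1)
         \<ge> 1 / (5 * real n * (real (a (k + 1)) + real (c (k + 1)) + 2))"
proof -
  obtain d' where "d = Suc d'"
    using \<open>d \<ge> 1\<close> by (cases d) auto
  moreover have "small_pairs n (a (k + 1)) i (thetaprod n (\<lambda>m. Theta n (a m) (c m)) (k + 1) d' (unitvec i))"
    by (simp add: small_pairs_thetaprod)
  ultimately show ?thesis
    using normalized_matvec_Theta_gap[OF n _ assms(3)] by (simp only: thetaprod_Suc_outer)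
qed

lemma thetaprod_limit_gap:
  assumes k: "k \<ge> 1" and j: "1 \<le> j \<and> j \<le> n div 2 - 1 \<and> j \<noteq> (i - 1) div 2"
    and L: "\<forall>t\<in>{1..n}. (\<lambda>d. normalized n (thetaprod n (\<lambda>m. Theta n (a m) (c m)) k d (unitvec i)) t)
                 \<longlonglongrightarrow> L t"
  shows "L (2 * j) > L (2 * j + 1)"
proof -
  define \<delta> where "\<delta> = 1 / (5 * real n * (real (a (k + 1)) + real (c (k + 1)) + 2))"
  have "2 * j \<in> {1..n}" "2 * j + 1 \<in> {1..n}"
    using j n by auto
  then have "(\<lambda>d. normalized n (thetaprod n (\<lambda>m. Theta n (a m) (c m)) k d (unitvec i)) (2 * j)
               - normalized n (thetaprod n (\<lambda>m. Theta n (a m) (c m)) k d (unitvec i)) (2 * j + 1))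
          \<longlonglongrightarrow> L (2 * j) - L (2 * j + 1)"
    using L by (intro tendsto_diff) auto
  moreover have "\<forall>d\<ge>1. \<delta> \<le> normalized n (thetaprod n (\<lambda>m. Theta n (a m) (c m)) k d (unitvec i)) (2 * j)
               - normalized n (thetaprod n (\<lambda>m. Theta n (a m) (c m)) k d (unitvec i)) (2 * j + 1)"
    unfolding \<delta>_def using normalized_thetaprod_gap[OF k _ j] by blast
  ultimately have "\<delta> \<le> L (2 * j) - L (2 * j + 1)"
    by (intro LIMSEQ_le_const) blast+
  moreover have "\<delta> > 0"
    unfolding \<delta>_def using n by simp
  ultimately show ?thesis
    by linarith
qed

end

theorem mainTheorem9:
  fixes n p :: nat and a c :: "nat \<Rightarrow> nat" and i :: nat
    and mu :: "nat \<Rightarrow> nat \<Rightarrow> real"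
  assumes n_even: "even n" and n_ge: "n \<ge> 4"
    and p_ge: "p \<ge> n + 1"
    and c1_pos: "c 1 > 0"
    and a_def: "\<And>k. k \<ge> 1 \<Longrightarrow> a k = p * c k"
    and c_rec: "\<And>k. k \<ge> 1 \<Longrightarrow> c (k + 1) = p ^ 2 * c k"
    and mu_def: "\<And>k. \<exists>L. (\<forall>t\<in>{1..n}. (\<lambda>d. normalized n
                       (thetaprod n (\<lambda>m. Theta n (a m) (c m)) k d (unitvec i)) t)
                       \<longlonglongrightarrow> L t)
                   \<and> (\<exists>r>0. \<forall>t\<in>{1..n}. mu k t = r * L t)"
    and i_odd: "odd i" and i_ge: "3 \<le> i" and i_le: "i \<le> n - 1"
  shows "\<forall>k\<ge>1. \<forall>j. 1 \<le> j \<and> j \<le> n div 2 - 1 \<and> j \<noteq> (i - 1) div 2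
           \<longrightarrow> mu k (2 * j) > mu k (2 * j + 1)"
proof (intro allI impI)
  have p: "p \<ge> 5"
    using p_ge n_ge by simp
  have c_pos: "c k > 0" if "k \<ge> 1" for k
    using that by (induction k rule: dec_induct) (use c1_pos c_rec p in auto)
  have growth: "a k \<ge> 2 \<and> 5 * a k \<le> c (k + 1)" if "k \<ge> 1" for k
    using a_def[OF that] c_rec[OF that] c_pos[OF that] mult_le_mono[OF p, of 1 "c k"] p
    by (simp add: power2_eq_square)
  fix k j :: nat
  assume k: "k \<ge> 1" and j: "1 \<le> j \<and> j \<le> n div 2 - 1 \<and> j \<noteq> (i - 1) div 2"
  obtain L r where L: "\<forall>t\<in>{1..n}. (\<lambda>d. normalized n
                       (thetaprod n (\<lambda>m. Theta n (a m) (c m)) k d (unitvec i)) t) \<longlonglongrightarrow> L t"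
    and "r > 0" and mu: "\<forall>t\<in>{1..n}. mu k t = r * L t"
    using mu_def[of k] by blast
  have "L (2 * j) > L (2 * j + 1)"
    using thetaprod_limit_gap[OF n_even n_ge i_odd i_ge i_le growth k j L] by blast
  moreover have "2 * j \<in> {1..n}" "2 * j + 1 \<in> {1..n}"
    using j n_even n_ge by auto
  ultimately show "mu k (2 * j) > mu k (2 * j + 1)"
    using mu \<open>r > 0\<close> by simp
qed

end
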